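(* Let $a,b\in\mathbb{N}$ with $a\ge b$, let $T(a,b)$ be the classical Jacobi operator, fix $k\in\{0,1,\ldots,b-1\}$ and let $E_k$ be the eigenspace of $T(a,b)$ for the eigenvalue $(k+1)(k-a-b)$. Then $E_k$ is 2-dimensional and consists of rational functions. There are three distinct one-dimensional subspaces $L_2,L_3,L_4\subset E_k$ such that: every nonzero element of $L_2$ is a type 2 eigenfunction of index $k$ and degree $k-a-b$; every nonzero element of $L_3$ is a type 3 eigenfunction of index $a-k-1$ and degree $-k-1$; every nonzero element of $L_4$ is a type 4 eigenfunction of index $b-k-1$ and degree $-k-1$; and every element of $E_k\setminus(L_2\cup L_3\cup L_4)$ is a type 2 eigenfunction of index $a+b-k-1$ and degree $-k-1$.
   Context: $D=d/dx$; $T(a,b)=(x^2-1)\big(D^2+(\frac{a+1}{x-1}+\frac{b+1}{x+1})D\big)$. For a nonzero eigenfunction $\phi$ with $w=\phi'/\phi$ rational: its asymptotic type is 1 if $w$ is regular at $x=\pm1$, 2 if $w$ has poles at both $x=1$ and $x=-1$, 3 if it has a pole at $x=1$ but not at $x=-1$, 4 if it has a pole at $x=-1$ but not at $x=1$; its degree is $\lim_{x\to\infty}xw(x)$ (for rational $\phi$, degree of numerator minus degree of denominator); its index is $\deg\phi-d_\imath$ where $\imath$ is its type and $d_1=0$, $d_2=-a-b$, $d_3=-a$, $d_4=-b$. *)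

theory Defs
  imports "HOL-Analysis.Analysis" "HOL-Computational_Algebra.Polynomial"
begin

text \<open>Eigenfunctions are real functions considered on the interval (1, infinity),
  the region where the Jacobi operator is regular; equality of functions is
  always understood on this interval.\<close>

definition jacobiT :: "nat \<Rightarrow> nat \<Rightarrow> (real \<Rightarrow> real) \<Rightarrow> real \<Rightarrow> real" where
  "jacobiT a b \<phi> x = (x\<^sup>2 - 1) *
     (deriv (deriv \<phi>) x + ((real a + 1) / (x - 1) + (real b + 1) / (x + 1)) * deriv \<phi> x)"

definition jacobi_eigenspace :: "nat \<Rightarrow> nat \<Rightarrow> real \<Rightarrow> (real \<Rightarrow> real) set" where
  "jacobi_eigenspace a b lam =
     {\<phi>. (\<forall>x>1. \<phi> differentiable (at x) \<and> deriv \<phi> differentiable (at x)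
              \<and> jacobiT a b \<phi> x = lam * \<phi> x)}"

definition nonzero_on :: "(real \<Rightarrow> real) \<Rightarrow> bool" where
  "nonzero_on \<phi> \<longleftrightarrow> (\<exists>x>1. \<phi> x \<noteq> 0)"

definition in_line :: "(real \<Rightarrow> real) \<Rightarrow> (real \<Rightarrow> real) \<Rightarrow> bool" where
  "in_line \<psi> \<phi> \<longleftrightarrow> (\<exists>c. \<forall>x>1. \<phi> x = c * \<psi> x)"

definition lin_indep2 :: "(real \<Rightarrow> real) \<Rightarrow> (real \<Rightarrow> real) \<Rightarrow> bool" where
  "lin_indep2 \<phi>1 \<phi>2 \<longleftrightarrow>
     (\<forall>c1 c2. (\<forall>x>1. c1 * \<phi>1 x + c2 * \<phi>2 x = 0) \<longrightarrow> c1 = 0 \<and> c2 = 0)"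

definition rational_fun :: "(real \<Rightarrow> real) \<Rightarrow> bool" where
  "rational_fun \<phi> \<longleftrightarrow> (\<exists>p q. q \<noteq> 0 \<and> (\<forall>x>1. poly q x * \<phi> x = poly p x))"

definition logderiv_rational :: "(real \<Rightarrow> real) \<Rightarrow> bool" where
  "logderiv_rational \<phi> \<longleftrightarrow>
     (\<exists>N D. D \<noteq> 0 \<and> (\<forall>x>1. poly D x * deriv \<phi> x = poly N x * \<phi> x))"

definition logderiv_regular_at :: "(real \<Rightarrow> real) \<Rightarrow> real \<Rightarrow> bool" where
  "logderiv_regular_at \<phi> c \<longleftrightarrow>
     (\<exists>N D. poly D c \<noteq> 0 \<and> (\<forall>x>1. poly D x * deriv \<phi> x = poly N x * \<phi> x))"

definition asym_type :: "(real \<Rightarrow> real) \<Rightarrow> nat" where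
  "asym_type \<phi> =
     (if logderiv_regular_at \<phi> 1 \<and> logderiv_regular_at \<phi> (-1) then 1
      else if \<not> logderiv_regular_at \<phi> 1 \<and> \<not> logderiv_regular_at \<phi> (-1) then 2
      else if \<not> logderiv_regular_at \<phi> 1 then 3
      else 4)"

definition has_eig_degree :: "(real \<Rightarrow> real) \<Rightarrow> real \<Rightarrow> bool" where
  "has_eig_degree \<phi> d \<longleftrightarrow> ((\<lambda>x. x * (deriv \<phi> x / \<phi> x)) \<longlongrightarrow> d) at_top"

definition type_offset :: "nat \<Rightarrow> nat \<Rightarrow> nat \<Rightarrow> real" where
  "type_offset a b t =
     (if t = 1 then 0 else if t = 2 then - real a - real b
      else if t = 3 then - real a else - real b)"

definition has_eig_index :: "nat \<Rightarrow> nat \<Rightarrow> (real \<Rightarrow> real) \<Rightarrow> real \<Rightarrow> bool" where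
  "has_eig_index a b \<phi> i \<longleftrightarrow>
     (\<exists>d. has_eig_degree \<phi> d \<and> i = d - type_offset a b (asym_type \<phi>))"

definition typed_eigenfunction ::
  "nat \<Rightarrow> nat \<Rightarrow> (real \<Rightarrow> real) \<Rightarrow> nat \<Rightarrow> real \<Rightarrow> real \<Rightarrow> bool" where
  "typed_eigenfunction a b \<phi> t i d \<longleftrightarrow>
     nonzero_on \<phi> \<and> logderiv_rational \<phi> \<and> asym_type \<phi> = t
     \<and> has_eig_index a b \<phi> i \<and> has_eig_degree \<phi> d"

end

(*
  Writing phi = (x-1)^(-alpha) (x+1)^(-beta) u with alpha in {0,a} and beta in {0,b} conjugates
  T(a,b) into T(a-2 alpha, b-2 beta) plus a constant, so phi is an eigenfunction iff the polynomial
  u is an eigenfunction of the conjugated operator. For (alpha,beta) = (0,b) and (a,0) this yields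
  Jacobi polynomials p and q of degrees b-k-1 and a-k-1, built from their Taylor series at 1 and
  nonvanishing at both endpoints: psi4 = (x+1)^(-b) p and psi3 = (x-1)^(-a) q are eigenfunctions
  of types 4 and 3. Their Wronskian is not identically zero, so by Abel's identity they span the
  eigenspace. Hence every eigenfunction is (x-1)^(-a) (x+1)^(-b) times a polynomial eigenfunction
  of T(-a,-b), whose degree must be k or a+b-k-1, and it is k exactly on the line where the
  leading coefficients of the two summands cancel. Type, degree and index are then read off from
  alpha, beta and the degree of the polynomial factor.
*)

theory Submission
  imports Defs
begin

section \<open>Polynomial eigenfunctions of the Jacobi operator\<close>

lemma poly_eq_0_if_roots_cofinite_Ioi:
  fixes p :: "real poly"
  assumes "finite F" and "\<forall>x>1. x \<notin> F \<longrightarrow> poly p x = 0"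
  shows "p = 0"
proof (rule ccontr)
  assume "p \<noteq> 0"
  then have "finite ({x. poly p x = 0} \<union> F)"
    using poly_roots_finite assms(1) by blast
  moreover have "{1<..} \<subseteq> {x. poly p x = 0} \<union> F"
    using assms(2) by auto
  ultimately show False
    using infinite_Ioi finite_subset by blast
qed

lemma poly_eq_0_iff_on_Ioi: "(\<forall>x>1. poly p x = 0) \<longleftrightarrow> p = (0 :: real poly)"
  using poly_eq_0_if_roots_cofinite_Ioi[of "{}" p] by auto

text \<open>Since (x^2-1)((A+1)/(x-1) + (B+1)/(x+1)) = (A+B+2)x + (A-B), on polynomials
  \<open>jacobiT a b\<close> acts as \<open>jacobi_poly_op a b\<close>. The parameters are real because
  conjugation by endpoint factors produces negative ones.\<close>

definition jacobi_poly_op :: "real \<Rightarrow> real \<Rightarrow> real poly \<Rightarrow> real poly" where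
  "jacobi_poly_op A B u = [:-1, 0, 1:] * pderiv (pderiv u) + [:A - B, A + B + 2:] * pderiv u"

lemma poly_jacobi_poly_op:
  "poly (jacobi_poly_op A B u) x =
     (x\<^sup>2 - 1) * poly (pderiv (pderiv u)) x + ((A + B + 2) * x + (A - B)) * poly (pderiv u) x"
  by (simp add: jacobi_poly_op_def algebra_simps power2_eq_square)

lemma coeff_jacobi_poly_op:
  "coeff (jacobi_poly_op A B u) i =
     real i * (real i + A + B + 1) * coeff u i + (A - B) * (real i + 1) * coeff u (Suc i)
     - (real i + 1) * (real i + 2) * coeff u (Suc (Suc i))"
  by (cases i; cases "i - 1")
    (auto simp: jacobi_poly_op_def coeff_pderiv coeff_pCons algebra_simps split: nat.split)

lemma jacobi_poly_op_eigenvalue: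
  assumes "jacobi_poly_op A B u = smult \<nu> u" "u \<noteq> 0"
  shows "\<nu> = real (degree u) * (real (degree u) + A + B + 1)"
proof -
  have "coeff (jacobi_poly_op A B u) (degree u) = coeff (smult \<nu> u) (degree u)"
    using assms(1) by simp
  then have "real (degree u) * (real (degree u) + A + B + 1) * lead_coeff u = \<nu> * lead_coeff u"
    by (simp add: coeff_jacobi_poly_op coeff_eq_0)
  then show ?thesis
    using assms(2) by simp
qed

lemma pcompose_jacobi_poly_op_reflect:
  "pcompose (jacobi_poly_op A B u) [:0, -1:] = jacobi_poly_op B A (pcompose u [:0, -1:])"
proof -
  have pderiv_reflect: "pderiv (pcompose v [:0, -1:]) = - pcompose (pderiv v) [:0, -1:]"
    for v :: "real poly"
    by (simp add: pderiv_pcompose pderiv_pCons)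
  show ?thesis
    by (intro poly_ext)
      (simp add: poly_jacobi_poly_op poly_pcompose pderiv_reflect pderiv_minus algebra_simps)
qed

definition jacobi_poly_op_shifted :: "real \<Rightarrow> real \<Rightarrow> real poly \<Rightarrow> real poly" where
  "jacobi_poly_op_shifted A B s =
     [:0, 2, 1:] * pderiv (pderiv s) + [:2 * (A + 1), A + B + 2:] * pderiv s"

lemma coeff_jacobi_poly_op_shifted:
  "coeff (jacobi_poly_op_shifted A B s) i =
     real i * (real i + A + B + 1) * coeff s i
     + 2 * (real i + 1) * (real i + A + 1) * coeff s (Suc i)"
  by (cases i; cases "i - 1")
    (auto simp: jacobi_poly_op_shifted_def coeff_pderiv coeff_pCons algebra_simps split: nat.split)

lemma pcompose_jacobi_poly_op_shift:
  "pcompose (jacobi_poly_op A B u) [:1, 1:] = jacobi_poly_op_shifted A B (pcompose u [:1, 1:])"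
  by (rule poly_ext)
    (simp add: jacobi_poly_op_def jacobi_poly_op_shifted_def poly_pcompose pderiv_pcompose
      pderiv_pCons algebra_simps)

lemma jacobi_eigenpoly_nonzero_at_1:
  assumes eigen: "jacobi_poly_op A B u = smult \<nu> u" and "u \<noteq> 0"
    and denom: "\<forall>i<degree u. real i + A + 1 \<noteq> 0"
  shows "poly u 1 \<noteq> 0"
proof
  assume root: "poly u 1 = 0"
  define s where "s = pcompose u [:1, 1:]"
  have eigen_s: "jacobi_poly_op_shifted A B s = smult \<nu> s"
    using pcompose_jacobi_poly_op_shift[of A B u] by (simp add: s_def eigen pcompose_smult)
  have "coeff s i = 0" if "i \<le> degree u" for i
    using that
  proof (induction i)
    case 0
    then show ?case
      using root by (simp add: s_def poly_0_coeff_0[symmetric] poly_pcompose)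
  next
    case (Suc i)
    then have "coeff s i = 0" by simp
    moreover have "coeff (jacobi_poly_op_shifted A B s) i = coeff (smult \<nu> s) i"
      using eigen_s by simp
    ultimately have "2 * (real i + 1) * (real i + A + 1) * coeff s (Suc i) = 0"
      by (simp add: coeff_jacobi_poly_op_shifted)
    then show ?case
      using denom Suc.prems by simp
  qed
  then have "s = 0"
    by (simp add: s_def degree_pcompose leading_coeff_0_iff[symmetric])
  then show False
    using \<open>u \<noteq> 0\<close> pcompose_eq_0[of u "[:1, 1:]"] by (simp add: s_def)
qed

text \<open>Taylor coefficients at 1 of the Jacobi polynomial of degree m, i.e. of the hypergeometric
  series 2F1(-m, m+A+B+1; A+1; (1-x)/2); the factor m - i makes the series terminate.\<close>

fun jacobi_taylor_coeff :: "real \<Rightarrow> real \<Rightarrow> nat \<Rightarrow> nat \<Rightarrow> real" where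
  "jacobi_taylor_coeff A B m 0 = 1"
| "jacobi_taylor_coeff A B m (Suc i) =
     (real m - real i) * (real m + real i + A + B + 1) / (2 * (real i + 1) * (real i + A + 1))
     * jacobi_taylor_coeff A B m i"

lemma jacobi_taylor_coeff_eq_0: "m < i \<Longrightarrow> jacobi_taylor_coeff A B m i = 0"
  by (induction i) (auto simp: less_Suc_eq)

lemma jacobi_taylor_coeff_nonzero:
  assumes "\<forall>i<m. real m + real i + A + B + 1 \<noteq> 0" "\<forall>i<m. real i + A + 1 \<noteq> 0" "i \<le> m"
  shows "jacobi_taylor_coeff A B m i \<noteq> 0"
  using assms(3) by (induction i) (use assms(1,2) in \<open>auto simp: add_nonneg_pos\<close>)

definition jacobi_taylor_poly :: "real \<Rightarrow> real \<Rightarrow> nat \<Rightarrow> real poly" where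
  "jacobi_taylor_poly A B m = Poly (map (jacobi_taylor_coeff A B m) [0..<Suc m])"

lemma coeff_jacobi_taylor_poly: "coeff (jacobi_taylor_poly A B m) i = jacobi_taylor_coeff A B m i"
  by (cases "i \<le> m")
    (auto simp del: upt_Suc simp: jacobi_taylor_poly_def nth_default_def nth_map_upt
      less_Suc_eq_le jacobi_taylor_coeff_eq_0)

lemma jacobi_poly_op_shifted_taylor_poly:
  assumes "\<forall>i<m. real i + A + 1 \<noteq> 0"
  shows "jacobi_poly_op_shifted A B (jacobi_taylor_poly A B m) =
    smult (real m * (real m + A + B + 1)) (jacobi_taylor_poly A B m)"
proof (rule poly_eqI)
  fix i
  let ?c = "jacobi_taylor_coeff A B m"
  have "2 * (real i + 1) * (real i + A + 1) * ?c (Suc i) =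
      (real m * (real m + A + B + 1) - real i * (real i + A + B + 1)) * ?c i"
  proof (cases "i < m")
    case True
    then have "2 * (real i + 1) * (real i + A + 1) \<noteq> 0"
      using assms by (simp add: add_eq_0_iff)
    then have "2 * (real i + 1) * (real i + A + 1) * ?c (Suc i) =
        (real m - real i) * (real m + real i + A + B + 1) * ?c i"
      by simp
    then show ?thesis
      by (simp add: algebra_simps)
  next
    case False
    then have "?c (Suc i) = 0"
      by (intro jacobi_taylor_coeff_eq_0) simp
    moreover have "i = m \<or> ?c i = 0"
      using False jacobi_taylor_coeff_eq_0[of m i] by (cases "i = m") simp_all
    ultimately show ?thesis
      by auto
  qed
  then show "coeff (jacobi_poly_op_shifted A B (jacobi_taylor_poly A B m)) i =
      coeff (smult (real m * (real m + A + B + 1)) (jacobi_taylor_poly A B m)) i"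
    by (simp add: coeff_jacobi_poly_op_shifted coeff_jacobi_taylor_poly algebra_simps)
qed

lemma degree_jacobi_taylor_poly:
  assumes "\<forall>i<m. real m + real i + A + B + 1 \<noteq> 0" "\<forall>i<m. real i + A + 1 \<noteq> 0"
  shows "degree (jacobi_taylor_poly A B m) = m"
proof (rule antisym)
  show "degree (jacobi_taylor_poly A B m) \<le> m"
    by (rule degree_le) (simp add: coeff_jacobi_taylor_poly jacobi_taylor_coeff_eq_0)
  show "m \<le> degree (jacobi_taylor_poly A B m)"
    by (rule le_degree) (simp add: coeff_jacobi_taylor_poly jacobi_taylor_coeff_nonzero[OF assms])
qed

lemma jacobi_eigenpoly_exists:
  assumes "\<forall>i<m. real m + real i + A + B + 1 \<noteq> 0"
    and "\<forall>i<m. real i + A + 1 \<noteq> 0" and "\<forall>i<m. real i + B + 1 \<noteq> 0"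
  shows "\<exists>u. jacobi_poly_op A B u = smult (real m * (real m + A + B + 1)) u
    \<and> degree u = m \<and> poly u 1 \<noteq> 0 \<and> poly u (-1) \<noteq> 0"
proof (intro exI conjI)
  define \<nu> where "\<nu> = real m * (real m + A + B + 1)"
  define s where "s = jacobi_taylor_poly A B m"
  define u where "u = pcompose s [:-1, 1:]"
  have unshift: "pcompose u [:1, 1:] = s"
    by (simp add: u_def pcompose_assoc[symmetric] pcompose_pCons)
  have shifted: "pcompose (jacobi_poly_op A B u) [:1, 1:] = pcompose (smult \<nu> u) [:1, 1:]"
    using assms(2) by (simp add: pcompose_jacobi_poly_op_shift unshift s_def \<nu>_def
        jacobi_poly_op_shifted_taylor_poly pcompose_smult)
  show eigen: "jacobi_poly_op A B u = smult \<nu> u"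
  proof (rule poly_ext)
    fix x
    show "poly (jacobi_poly_op A B u) x = poly (smult \<nu> u) x"
      using arg_cong[OF shifted, of "\<lambda>p. poly p (x - 1)"] by (simp add: poly_pcompose)
  qed
  show degree: "degree u = m"
    using degree_jacobi_taylor_poly[OF assms(1,2)] by (simp add: u_def s_def degree_pcompose)
  show "poly u 1 \<noteq> 0"
    by (simp add: u_def s_def poly_pcompose poly_0_coeff_0 coeff_jacobi_taylor_poly)
  then have "u \<noteq> 0"
    by auto
  define v where "v = pcompose u [:0, -1:]"
  have "jacobi_poly_op B A v = smult \<nu> v"
    by (simp add: v_def pcompose_jacobi_poly_op_reflect[symmetric] eigen pcompose_smult)
  moreover have "v \<noteq> 0" "degree v = m"
    using \<open>u \<noteq> 0\<close> degree by (auto simp: v_def degree_pcompose pcompose_eq_0)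
  ultimately have "poly v 1 \<noteq> 0"
    using assms(3) by (intro jacobi_eigenpoly_nonzero_at_1) auto
  then show "poly u (-1) \<noteq> 0"
    by (simp add: v_def poly_pcompose)
qed

section \<open>Conjugation by endpoint factors\<close>

lemma eventually_greater_1_nhds: "x > 1 \<Longrightarrow> eventually (\<lambda>y. y > (1::real)) (nhds x)"
  by (rule eventually_nhds_in_open[of "{1<..}", simplified]) auto

lemma deriv_eq_on_Ioi:
  fixes f g :: "real \<Rightarrow> real"
  assumes "\<forall>y>1. f y = g y" "x > 1"
  shows "deriv f x = deriv g x"
  using eventually_greater_1_nhds[OF assms(2)]
  by (intro deriv_cong_ev) (auto elim!: eventually_mono simp: assms(1))

lemma differentiable_eq_on_Ioi:
  fixes f g :: "real \<Rightarrow> real"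
  assumes "\<forall>y>1. f y = g y" "x > 1"
  shows "f differentiable (at x) \<longleftrightarrow> g differentiable (at x)"
proof -
  have "eventually (\<lambda>y. f y = g y) (nhds x)"
    using eventually_greater_1_nhds[OF assms(2)] by eventually_elim (use assms(1) in auto)
  then show ?thesis
    unfolding real_differentiable_def using DERIV_cong_ev[OF refl _ refl] by blast
qed

lemma jacobi_eigenspace_cong:
  assumes eq: "\<forall>y>1. \<phi> y = \<psi> y"
  shows "\<phi> \<in> jacobi_eigenspace a b lam \<longleftrightarrow> \<psi> \<in> jacobi_eigenspace a b lam"
proof -
  have deriv_eq: "\<forall>y>1. deriv \<phi> y = deriv \<psi> y"
    using deriv_eq_on_Ioi[OF eq] by blast
  have "\<phi> differentiable (at x) \<and> deriv \<phi> differentiable (at x) \<and> jacobiT a b \<phi> x = lam * \<phi> x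
    \<longleftrightarrow> \<psi> differentiable (at x) \<and> deriv \<psi> differentiable (at x) \<and> jacobiT a b \<psi> x = lam * \<psi> x"
    if "x > 1" for x
    using that eq deriv_eq deriv_eq_on_Ioi[OF deriv_eq that] differentiable_eq_on_Ioi[OF eq that]
      differentiable_eq_on_Ioi[OF deriv_eq that]
    by (simp add: jacobiT_def)
  then show ?thesis
    unfolding jacobi_eigenspace_def by blast
qed

definition endpoint_factor :: "nat \<Rightarrow> nat \<Rightarrow> real \<Rightarrow> real" where
  "endpoint_factor \<alpha> \<beta> x = (x - 1) powr - real \<alpha> * (x + 1) powr - real \<beta>"

lemma endpoint_factor_pos: "x > 1 \<Longrightarrow> endpoint_factor \<alpha> \<beta> x > 0"
  by (simp add: endpoint_factor_def)

lemma endpoint_factor_mult_powers: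
  "x > 1 \<Longrightarrow> endpoint_factor \<alpha> \<beta> x * ((x - 1) ^ \<alpha> * (x + 1) ^ \<beta>) = 1"
  by (simp add: endpoint_factor_def powr_minus powr_realpow field_simps)

lemma endpoint_factor_drop:
  "x > 1 \<Longrightarrow> endpoint_factor \<alpha> 0 x = endpoint_factor \<alpha> \<beta> x * (x + 1) ^ \<beta>"
  "x > 1 \<Longrightarrow> endpoint_factor 0 \<beta> x = endpoint_factor \<alpha> \<beta> x * (x - 1) ^ \<alpha>"
  by (simp_all add: endpoint_factor_def powr_minus powr_realpow field_simps)

lemma endpoint_factor_has_derivative:
  "x > 1 \<Longrightarrow> (endpoint_factor \<alpha> \<beta> has_real_derivative
     - endpoint_factor \<alpha> \<beta> x * (\<alpha> / (x - 1) + \<beta> / (x + 1))) (at x)"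
  unfolding endpoint_factor_def
  by (auto intro!: derivative_eq_intros simp: powr_diff field_simps)

lemma endpoint_factor_poly_has_derivative:
  fixes u :: "real poly"
  assumes "x > 1"
  shows "((\<lambda>y. endpoint_factor \<alpha> \<beta> y * poly u y) has_real_derivative
      endpoint_factor \<alpha> \<beta> x * (poly (pderiv u) x - (\<alpha> / (x - 1) + \<beta> / (x + 1)) * poly u x)) (at x)"
  using assms
  by (auto intro!: derivative_eq_intros endpoint_factor_has_derivative simp: algebra_simps)

lemma endpoint_factor_poly_has_second_derivative:
  fixes u :: "real poly"
  assumes "x > 1"
  shows "((\<lambda>y. endpoint_factor \<alpha> \<beta> y *
        (poly (pderiv u) y - (\<alpha> / (y - 1) + \<beta> / (y + 1)) * poly u y)) has_real_derivative
      endpoint_factor \<alpha> \<beta> x * (poly (pderiv (pderiv u)) x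
        - 2 * (\<alpha> / (x - 1) + \<beta> / (x + 1)) * poly (pderiv u) x
        + ((\<alpha> / (x - 1) + \<beta> / (x + 1))\<^sup>2 + \<alpha> / (x - 1)\<^sup>2 + \<beta> / (x + 1)\<^sup>2) * poly u x)) (at x)"
proof -
  have "((\<lambda>y. \<alpha> / (y - 1) + \<beta> / (y + 1)) has_real_derivative
      - (\<alpha> / (x - 1)\<^sup>2 + \<beta> / (x + 1)\<^sup>2)) (at x)"
    using assms by (auto intro!: derivative_eq_intros simp: power2_eq_square field_simps)
  from DERIV_mult[OF endpoint_factor_has_derivative[OF assms]
      DERIV_diff[OF poly_DERIV DERIV_mult[OF this poly_DERIV]]]
  show ?thesis
    by (rule DERIV_cong) (simp add: algebra_simps power2_eq_square)
qed

text \<open>Without the hypotheses on \<open>\<alpha>\<close> and \<open>\<beta>\<close> the right-hand side would carry the extra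
  terms \<open>\<alpha>(\<alpha>-a)(x+1)/(x-1) + \<beta>(\<beta>-b)(x-1)/(x+1)\<close>.\<close>

lemma endpoint_conjugation_identity:
  fixes x \<alpha> \<beta> a b f df ddf :: real
  assumes "x - 1 \<noteq> 0" "x + 1 \<noteq> 0" and "\<alpha> = 0 \<or> \<alpha> = a" "\<beta> = 0 \<or> \<beta> = b"
  defines "s \<equiv> \<alpha> / (x - 1) + \<beta> / (x + 1)"
  shows "(x\<^sup>2 - 1) * (ddf - 2 * s * df + (s\<^sup>2 + \<alpha> / (x - 1)\<^sup>2 + \<beta> / (x + 1)\<^sup>2) * f
      + ((a + 1) / (x - 1) + (b + 1) / (x + 1)) * (df - s * f))
    = (x\<^sup>2 - 1) * ddf + ((a - 2 * \<alpha> + (b - 2 * \<beta>) + 2) * x + (a - 2 * \<alpha> - (b - 2 * \<beta>))) * df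
      - (\<alpha> * (b + 1) + \<beta> * (a + 1) - 2 * \<alpha> * \<beta>) * f"
proof -
  define i1 i2 where "i1 = 1 / (x - 1)" and "i2 = 1 / (x + 1)"
  have inverses: "(x - 1) * i1 = 1" "(x + 1) * i2 = 1"
    using assms(1,2) by (auto simp: i1_def i2_def)
  have exponents: "\<alpha> * (\<alpha> - a) = 0" "\<beta> * (\<beta> - b) = 0"
    using assms(3,4) by auto
  have "s = \<alpha> * i1 + \<beta> * i2" "\<alpha> / (x - 1)\<^sup>2 = \<alpha> * i1 * i1" "\<beta> / (x + 1)\<^sup>2 = \<beta> * i2 * i2"
    "(a + 1) / (x - 1) = (a + 1) * i1" "(b + 1) / (x + 1) = (b + 1) * i2"
    by (simp_all add: s_def i1_def i2_def power2_eq_square)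
  then show ?thesis
    using inverses exponents by algebra
qed

lemma deriv_endpoint_factor_poly:
  "x > 1 \<Longrightarrow> deriv (\<lambda>y. endpoint_factor \<alpha> \<beta> y * poly u y) x =
    endpoint_factor \<alpha> \<beta> x * (poly (pderiv u) x - (\<alpha> / (x - 1) + \<beta> / (x + 1)) * poly u x)"
  by (rule DERIV_imp_deriv[OF endpoint_factor_poly_has_derivative])

lemma deriv_eq_endpoint_factor_poly:
  assumes "\<forall>y>1. \<phi> y = endpoint_factor \<alpha> \<beta> y * poly u y" and "x > 1"
  shows "deriv \<phi> x =
    endpoint_factor \<alpha> \<beta> x * (poly (pderiv u) x - (\<alpha> / (x - 1) + \<beta> / (x + 1)) * poly u x)"
  using deriv_eq_on_Ioi[OF assms] deriv_endpoint_factor_poly[OF assms(2)] by simp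

lemma jacobiT_endpoint_factor_poly:
  assumes "x > 1" "\<alpha> = 0 \<or> \<alpha> = a" "\<beta> = 0 \<or> \<beta> = b"
  shows "jacobiT a b (\<lambda>y. endpoint_factor \<alpha> \<beta> y * poly u y) x =
    endpoint_factor \<alpha> \<beta> x * (poly (jacobi_poly_op (real a - 2 * real \<alpha>) (real b - 2 * real \<beta>) u) x
      - (real \<alpha> * (real b + 1) + real \<beta> * (real a + 1) - 2 * real \<alpha> * real \<beta>) * poly u x)"
proof -
  have "deriv (deriv (\<lambda>y. endpoint_factor \<alpha> \<beta> y * poly u y)) x =
      deriv (\<lambda>y. endpoint_factor \<alpha> \<beta> y *
        (poly (pderiv u) y - (\<alpha> / (y - 1) + \<beta> / (y + 1)) * poly u y)) x"
    using assms(1) by (intro deriv_eq_on_Ioi) (simp_all add: deriv_endpoint_factor_poly)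
  note second =
    this[unfolded DERIV_imp_deriv[OF endpoint_factor_poly_has_second_derivative[OF assms(1)]]]
  have nonzero: "x - 1 \<noteq> 0" "x + 1 \<noteq> 0"
    using assms(1) by auto
  have exponents: "real \<alpha> = 0 \<or> real \<alpha> = real a" "real \<beta> = 0 \<or> real \<beta> = real b"
    using assms(2,3) by auto
  note identity = endpoint_conjugation_identity[OF nonzero exponents, where f = "poly u x"
      and df = "poly (pderiv u) x" and ddf = "poly (pderiv (pderiv u)) x"]
  show ?thesis
    unfolding jacobiT_def second deriv_endpoint_factor_poly[OF assms(1)] poly_jacobi_poly_op
    by (simp only: identity[symmetric]) (simp add: algebra_simps)
qed

lemma endpoint_factor_poly_in_jacobi_eigenspace_iff:
  assumes eq: "\<forall>y>1. \<phi> y = endpoint_factor \<alpha> \<beta> y * poly u y"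
    and "\<alpha> = 0 \<or> \<alpha> = a" "\<beta> = 0 \<or> \<beta> = b"
  shows "\<phi> \<in> jacobi_eigenspace a b lam \<longleftrightarrow>
    jacobi_poly_op (real a - 2 * real \<alpha>) (real b - 2 * real \<beta>) u =
      smult (lam + real \<alpha> * (real b + 1) + real \<beta> * (real a + 1) - 2 * real \<alpha> * real \<beta>) u"
proof -
  let ?\<psi> = "\<lambda>y. endpoint_factor \<alpha> \<beta> y * poly u y"
  let ?L = "jacobi_poly_op (real a - 2 * real \<alpha>) (real b - 2 * real \<beta>) u"
  let ?\<nu> = "lam + real \<alpha> * (real b + 1) + real \<beta> * (real a + 1) - 2 * real \<alpha> * real \<beta>"
  have "?\<psi> differentiable (at x) \<and> deriv ?\<psi> differentiable (at x)" if "x > 1" for x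
  proof
    show "?\<psi> differentiable (at x)"
      using endpoint_factor_poly_has_derivative[OF that] real_differentiable_def by blast
    have "(\<lambda>y. endpoint_factor \<alpha> \<beta> y *
        (poly (pderiv u) y - (\<alpha> / (y - 1) + \<beta> / (y + 1)) * poly u y)) differentiable (at x)"
      using endpoint_factor_poly_has_second_derivative[OF that] real_differentiable_def by blast
    then show "deriv ?\<psi> differentiable (at x)"
      using that by (subst differentiable_eq_on_Ioi) (simp_all add: deriv_endpoint_factor_poly)
  qed
  then have "\<phi> \<in> jacobi_eigenspace a b lam \<longleftrightarrow> (\<forall>x>1. jacobiT a b ?\<psi> x = lam * ?\<psi> x)"
    using jacobi_eigenspace_cong[OF eq] by (auto simp: jacobi_eigenspace_def)
  also have "\<dots> \<longleftrightarrow> (\<forall>x>1. poly (?L - smult ?\<nu> u) x = 0)"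
  proof -
    have "jacobiT a b ?\<psi> x - lam * ?\<psi> x = endpoint_factor \<alpha> \<beta> x * poly (?L - smult ?\<nu> u) x"
      if "x > 1" for x
      using jacobiT_endpoint_factor_poly[OF that assms(2,3)] by (simp add: algebra_simps)
    then show ?thesis
      using endpoint_factor_pos[of _ \<alpha> \<beta>]
      by (metis (no_types, lifting) eq_iff_diff_eq_0 mult_eq_0_iff order_less_irrefl)
  qed
  finally show ?thesis
    by (simp only: poly_eq_0_iff_on_Ioi right_minus_eq)
qed

section \<open>Type and degree of endpoint-factor eigenfunctions\<close>

lemma poly_logderiv_tendsto_degree:
  fixes u :: "real poly"
  assumes "u \<noteq> 0"
  shows "((\<lambda>x. x * poly (pderiv u) x / poly u x) \<longlongrightarrow> real (degree u)) at_top"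
proof (cases "degree u = 0")
  case True
  then have "pderiv u = 0"
    by (simp add: pderiv_eq_0_iff)
  then show ?thesis
    using True by simp
next
  case False
  have at_top: "((\<lambda>x. poly p x / x ^ degree p) \<longlongrightarrow> lead_coeff p) at_top" for p :: "real poly"
    using tendsto_mono[OF at_top_le_at_infinity poly_divide_tendsto_aux] .
  have "lead_coeff (pderiv u) = real (degree u) * lead_coeff u"
    using False by (simp add: degree_pderiv coeff_pderiv)
  then have "((\<lambda>x. (poly (pderiv u) x / x ^ (degree u - 1)) / (poly u x / x ^ degree u))
      \<longlongrightarrow> real (degree u) * lead_coeff u / lead_coeff u) at_top"
    using at_top[of "pderiv u"] at_top[of u] assms
    by (intro tendsto_divide) (simp_all add: degree_pderiv)
  moreover have "eventually (\<lambda>x.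
      (poly (pderiv u) x / x ^ (degree u - 1)) / (poly u x / x ^ degree u)
        = x * poly (pderiv u) x / poly u x) at_top"
    using eventually_gt_at_top[of 0]
  proof eventually_elim
    case (elim x)
    have "x ^ degree u = x * x ^ (degree u - 1)"
      using False by (simp add: power_eq_if)
    then show ?case
      using elim by (simp add: field_simps)
  qed
  ultimately show ?thesis
    using assms by (simp add: tendsto_cong)
qed

lemma tendsto_divide_add_const_at_top: "((\<lambda>x::real. x / (x + c)) \<longlongrightarrow> 1) at_top"
proof -
  have "filterlim (\<lambda>x::real. c + x) at_top at_top"
    by (rule filterlim_tendsto_add_at_top[OF tendsto_const filterlim_ident])
  then have "((\<lambda>x. 1 - c * inverse (c + x)) \<longlongrightarrow> 1 - c * 0) at_top"
    by (intro tendsto_intros tendsto_inverse_0_at_top)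
  moreover have "eventually (\<lambda>x. 1 - c * inverse (c + x) = x / (x + c)) at_top"
    using eventually_gt_at_top[of "-c"] by eventually_elim (simp add: field_simps)
  ultimately show ?thesis
    by (simp add: tendsto_cong)
qed

lemma not_logderiv_regular_at:
  assumes "finite {x. x > 1 \<and> \<phi> x = 0}"
    and "\<forall>x>1. poly D x * deriv \<phi> x = poly N x * \<phi> x" and "poly D c = 0" and "poly N c \<noteq> 0"
  shows "\<not> logderiv_regular_at \<phi> c"
proof
  assume "logderiv_regular_at \<phi> c"
  then obtain N' D' where "poly D' c \<noteq> 0" and "\<forall>x>1. poly D' x * deriv \<phi> x = poly N' x * \<phi> x"
    unfolding logderiv_regular_at_def by blast
  have "poly (D' * N - D * N') x = 0" if "x > 1" "x \<notin> {x. x > 1 \<and> \<phi> x = 0}" for x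
  proof -
    have "poly (D' * N - D * N') x * \<phi> x =
        poly D' x * (poly N x * \<phi> x) - poly D x * (poly N' x * \<phi> x)"
      by (simp add: algebra_simps)
    also have "\<dots> = poly D' x * (poly D x * deriv \<phi> x) - poly D x * (poly D' x * deriv \<phi> x)"
      using assms(2) \<open>\<forall>x>1. poly D' x * deriv \<phi> x = poly N' x * \<phi> x\<close> that(1) by simp
    also have "\<dots> = 0"
      by simp
    finally show ?thesis
      using that by simp
  qed
  then have "D' * N - D * N' = 0"
    using poly_eq_0_if_roots_cofinite_Ioi[OF assms(1)] by blast
  then have "poly (D' * N - D * N') c = 0"
    by simp
  then show False
    using \<open>poly D' c \<noteq> 0\<close> assms(3,4) by simp
qed

lemma endpoint_factor_poly_logderiv:
  assumes eq: "\<forall>y>1. \<phi> y = endpoint_factor \<alpha> \<beta> y * poly u y" and "x > 1"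
  shows "poly u x * deriv \<phi> x = (poly (pderiv u) x - (\<alpha> / (x - 1) + \<beta> / (x + 1)) * poly u x) * \<phi> x"
  using deriv_eq_endpoint_factor_poly[OF assms] eq assms(2) by simp

lemma endpoint_factor_poly_zeros_finite:
  assumes "\<forall>y>1. \<phi> y = endpoint_factor \<alpha> \<beta> y * poly u y" and "u \<noteq> 0"
  shows "finite {x. x > 1 \<and> \<phi> x = 0}"
proof (rule finite_subset[OF _ poly_roots_finite[OF assms(2)]])
  show "{x. x > 1 \<and> \<phi> x = 0} \<subseteq> {x. poly u x = 0}"
    using assms(1) endpoint_factor_pos[of _ \<alpha> \<beta>] by force
qed

lemma nonzero_on_endpoint_factor_poly:
  assumes "\<forall>y>1. \<phi> y = endpoint_factor \<alpha> \<beta> y * poly u y" and "u \<noteq> 0"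
  shows "nonzero_on \<phi>"
proof -
  obtain x where "x > 1" "poly u x \<noteq> 0"
    using assms(2) poly_eq_0_iff_on_Ioi by blast
  then show ?thesis
    unfolding nonzero_on_def using assms(1) endpoint_factor_pos[of x \<alpha> \<beta>] by auto
qed

lemma endpoint_factor_poly_logderiv_cleared:
  assumes "\<forall>y>1. \<phi> y = endpoint_factor \<alpha> \<beta> y * poly u y" and "x > 1"
  shows "poly ([:-1, 0, 1:] * u) x * deriv \<phi> x =
    poly ([:-1, 0, 1:] * pderiv u - smult \<alpha> ([:1, 1:] * u) - smult \<beta> ([:-1, 1:] * u)) x * \<phi> x"
proof -
  have "x - 1 \<noteq> 0" "x + 1 \<noteq> 0" "x * x - 1 \<noteq> 0"
    using assms(2) less_1_mult[of x x] by auto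
  then show ?thesis
    using endpoint_factor_poly_logderiv[OF assms] by (simp add: field_simps)
qed

lemma logderiv_rational_endpoint_factor_poly:
  assumes "\<forall>y>1. \<phi> y = endpoint_factor \<alpha> \<beta> y * poly u y" and "u \<noteq> 0"
  shows "logderiv_rational \<phi>"
  unfolding logderiv_rational_def
proof (intro exI conjI)
  show "[:-1, 0, 1:] * u \<noteq> 0"
    using assms(2) by (subst mult_eq_0_iff) simp
qed (use endpoint_factor_poly_logderiv_cleared[OF assms(1)] in blast)

lemma logderiv_regular_at_endpoint_factor_poly:
  assumes eq: "\<forall>y>1. \<phi> y = endpoint_factor \<alpha> \<beta> y * poly u y"
    and "poly u 1 \<noteq> 0" and "poly u (-1) \<noteq> 0"
  shows "logderiv_regular_at \<phi> 1 \<longleftrightarrow> \<alpha> = 0" and "logderiv_regular_at \<phi> (-1) \<longleftrightarrow> \<beta> = 0"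
proof -
  have "u \<noteq> 0"
    using assms(2) by auto
  note singular = not_logderiv_regular_at[OF endpoint_factor_poly_zeros_finite[OF eq \<open>u \<noteq> 0\<close>]
      allI[OF impI[OF endpoint_factor_poly_logderiv_cleared[OF eq]]]]
  have regular_1: "logderiv_regular_at \<phi> 1" if "\<alpha> = 0"
    unfolding logderiv_regular_at_def
  proof (intro exI conjI allI impI)
    show "poly ([:1, 1:] * u) 1 \<noteq> 0"
      using assms(2) by simp
    fix x :: real
    assume "x > 1"
    then show "poly ([:1, 1:] * u) x * deriv \<phi> x = poly ([:1, 1:] * pderiv u - smult \<beta> u) x * \<phi> x"
      using endpoint_factor_poly_logderiv[OF eq \<open>x > 1\<close>] that by (simp add: field_simps)
  qed
  have regular_minus_1: "logderiv_regular_at \<phi> (-1)" if "\<beta> = 0"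
    unfolding logderiv_regular_at_def
  proof (intro exI conjI allI impI)
    show "poly ([:-1, 1:] * u) (-1) \<noteq> 0"
      using assms(3) by simp
    fix x :: real
    assume "x > 1"
    then show "poly ([:-1, 1:] * u) x * deriv \<phi> x = poly ([:-1, 1:] * pderiv u - smult \<alpha> u) x * \<phi> x"
      using endpoint_factor_poly_logderiv[OF eq \<open>x > 1\<close>] that by (simp add: field_simps)
  qed
  show "logderiv_regular_at \<phi> 1 \<longleftrightarrow> \<alpha> = 0"
    using regular_1 singular[of 1] assms(2) by auto
  show "logderiv_regular_at \<phi> (-1) \<longleftrightarrow> \<beta> = 0"
    using regular_minus_1 singular[of "-1"] assms(3) by auto
qed

lemma has_eig_degree_endpoint_factor_poly:
  assumes eq: "\<forall>y>1. \<phi> y = endpoint_factor \<alpha> \<beta> y * poly u y" and "u \<noteq> 0"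
  shows "has_eig_degree \<phi> (real (degree u) - real \<alpha> - real \<beta>)"
  unfolding has_eig_degree_def
proof -
  have "((\<lambda>x. x * poly (pderiv u) x / poly u x - \<alpha> * (x / (x - 1)) - \<beta> * (x / (x + 1)))
      \<longlongrightarrow> real (degree u) - real \<alpha> * 1 - real \<beta> * 1) at_top"
    using tendsto_divide_add_const_at_top[of "-1"]
    by (intro tendsto_intros poly_logderiv_tendsto_degree[OF assms(2)]
        tendsto_divide_add_const_at_top) simp
  moreover have "eventually (\<lambda>x. x * poly (pderiv u) x / poly u x - \<alpha> * (x / (x - 1))
      - \<beta> * (x / (x + 1)) = x * (deriv \<phi> x / \<phi> x)) at_top"
    using eventually_gt_at_top[of 1]
      filter_leD[OF at_top_le_at_infinity poly_eventually_not_zero[OF assms(2)]]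
  proof eventually_elim
    case (elim x)
    have "endpoint_factor \<alpha> \<beta> x \<noteq> 0"
      using endpoint_factor_pos[of x \<alpha> \<beta>] elim by simp
    then have "deriv \<phi> x / \<phi> x =
        (poly (pderiv u) x - (\<alpha> / (x - 1) + \<beta> / (x + 1)) * poly u x) / poly u x"
      using elim eq by (simp add: deriv_eq_endpoint_factor_poly[OF eq])
    also have "\<dots> = poly (pderiv u) x / poly u x - \<alpha> / (x - 1) - \<beta> / (x + 1)"
      using elim by (simp add: diff_divide_distrib)
    finally have logderiv: "deriv \<phi> x / \<phi> x =
        poly (pderiv u) x / poly u x - \<alpha> / (x - 1) - \<beta> / (x + 1)" .
    have "x - 1 \<noteq> 0" "x + 1 \<noteq> 0"
      using elim by auto
    then show ?case
      unfolding logderiv using elim by (simp add: field_simps)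
  qed
  ultimately show "((\<lambda>x. x * (deriv \<phi> x / \<phi> x)) \<longlongrightarrow> real (degree u) - real \<alpha> - real \<beta>) at_top"
    by (simp add: tendsto_cong)
qed

lemma typed_eigenfunction_endpoint_factor_poly:
  assumes eq: "\<forall>y>1. \<phi> y = endpoint_factor \<alpha> \<beta> y * poly u y"
    and "poly u 1 \<noteq> 0" and "poly u (-1) \<noteq> 0"
    and t: "t = (if \<alpha> > 0 \<and> \<beta> > 0 then 2 else if \<alpha> > 0 then 3 else if \<beta> > 0 then 4 else 1)"
    and d: "d = real (degree u) - real \<alpha> - real \<beta>" and i: "i = d - type_offset a b t"
  shows "typed_eigenfunction a b \<phi> t i d"
proof -
  have "u \<noteq> 0"
    using assms(2) by auto
  have "asym_type \<phi> = t"
    unfolding asym_type_def logderiv_regular_at_endpoint_factor_poly[OF eq assms(2,3)] t by auto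
  then show ?thesis
    unfolding typed_eigenfunction_def has_eig_index_def d i
    using nonzero_on_endpoint_factor_poly[OF eq \<open>u \<noteq> 0\<close>]
      logderiv_rational_endpoint_factor_poly[OF eq \<open>u \<noteq> 0\<close>]
      has_eig_degree_endpoint_factor_poly[OF eq \<open>u \<noteq> 0\<close>]
    by blast
qed

section \<open>Wronskians and two-dimensionality\<close>

lemma lincomb_has_real_derivative:
  fixes f g :: "real \<Rightarrow> real"
  assumes "f differentiable (at x)" and "g differentiable (at x)"
  shows "((\<lambda>y. c * f y + d * g y) has_real_derivative c * deriv f x + d * deriv g x) (at x)"
  using assms by (intro DERIV_add DERIV_cmult) (simp_all add: DERIV_deriv_iff_real_differentiable)

lemma jacobi_eigenspace_lincomb:
  assumes "\<phi> \<in> jacobi_eigenspace a b lam" and "\<psi> \<in> jacobi_eigenspace a b lam"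
  shows "(\<lambda>x. c * \<phi> x + d * \<psi> x) \<in> jacobi_eigenspace a b lam"
proof -
  let ?\<chi> = "\<lambda>x. c * \<phi> x + d * \<psi> x"
  have diff: "\<phi> differentiable (at y)" "\<psi> differentiable (at y)"
    "deriv \<phi> differentiable (at y)" "deriv \<psi> differentiable (at y)" if "y > 1" for y
    using assms that unfolding jacobi_eigenspace_def by auto
  have deriv_\<chi>: "\<forall>y>1. deriv ?\<chi> y = c * deriv \<phi> y + d * deriv \<psi> y"
    using lincomb_has_real_derivative[OF diff(1,2)] DERIV_imp_deriv by blast
  show ?thesis
    unfolding jacobi_eigenspace_def
  proof (intro CollectI allI impI conjI)
    fix x :: real
    assume "x > 1"
    note first = lincomb_has_real_derivative[OF diff(1,2)[OF \<open>x > 1\<close>], of c d]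
    note second = lincomb_has_real_derivative[OF diff(3,4)[OF \<open>x > 1\<close>], of c d]
    show "?\<chi> differentiable (at x)"
      using first real_differentiable_def by blast
    show "deriv ?\<chi> differentiable (at x)"
      using second real_differentiable_def differentiable_eq_on_Ioi[OF deriv_\<chi> \<open>x > 1\<close>] by blast
    have "jacobiT a b ?\<chi> x = c * jacobiT a b \<phi> x + d * jacobiT a b \<psi> x"
      unfolding jacobiT_def deriv_eq_on_Ioi[OF deriv_\<chi> \<open>x > 1\<close>] DERIV_imp_deriv[OF second]
        deriv_\<chi>[rule_format, OF \<open>x > 1\<close>]
      by (simp add: algebra_simps)
    also have "\<dots> = lam * ?\<chi> x"
      using assms \<open>x > 1\<close> unfolding jacobi_eigenspace_def by (simp add: algebra_simps)
    finally show "jacobiT a b ?\<chi> x = lam * ?\<chi> x" .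
  qed
qed

lemma has_real_derivative_endpoint_powers:
  fixes x :: real
  assumes "x - 1 \<noteq> 0" and "x + 1 \<noteq> 0"
  shows "((\<lambda>x. (x - 1) ^ Suc a * (x + 1) ^ Suc b) has_real_derivative
    (x - 1) ^ Suc a * (x + 1) ^ Suc b * ((real a + 1) / (x - 1) + (real b + 1) / (x + 1))) (at x)"
proof -
  have power: "DERIV (\<lambda>x. (x + c) ^ Suc n) x :> (1 + real n) * (x + c) ^ n" for c :: real and n
    by (rule DERIV_cong[OF DERIV_power_Suc[OF DERIV_add[OF DERIV_ident DERIV_const]]]) simp
  have "x * x - 1 \<noteq> 0"
    using assms square_diff_one_factored[of x] by simp
  then have "(x - 1) * (x + 1) * ((real a + 1) / (x - 1) + (real b + 1) / (x + 1)) =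
      (real a + 1) * (x + 1) + (real b + 1) * (x - 1)"
    using assms by (simp add: field_simps)
  moreover have "(x - 1) ^ Suc a * (x + 1) ^ Suc b =
      (x - 1) ^ a * (x + 1) ^ b * ((x - 1) * (x + 1))"
    by (simp add: ac_simps)
  ultimately have factored:
    "(x - 1) ^ Suc a * (x + 1) ^ Suc b * ((real a + 1) / (x - 1) + (real b + 1) / (x + 1))
      = (x - 1) ^ a * (x + 1) ^ b * ((real a + 1) * (x + 1) + (real b + 1) * (x - 1))"
    by (metis mult.assoc)
  from DERIV_mult[OF power[of "-1" a] power[of 1 b]]
  have "DERIV (\<lambda>x. (x - 1) ^ Suc a * (x + 1) ^ Suc b) x :>
      (1 + real a) * (x - 1) ^ a * (x + 1) ^ Suc b + (1 + real b) * (x + 1) ^ b * (x - 1) ^ Suc a"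
    by simp
  then show ?thesis
    by (rule DERIV_cong) (simp only: factored, simp add: algebra_simps)
qed

definition wronskian :: "(real \<Rightarrow> real) \<Rightarrow> (real \<Rightarrow> real) \<Rightarrow> real \<Rightarrow> real" where
  "wronskian f g x = f x * deriv g x - deriv f x * g x"

lemma jacobi_wronskian_has_derivative:
  assumes "\<phi> \<in> jacobi_eigenspace a b lam" and "\<psi> \<in> jacobi_eigenspace a b lam" and "x > 1"
  shows "(wronskian \<phi> \<psi> has_real_derivative
    - ((real a + 1) / (x - 1) + (real b + 1) / (x + 1)) * wronskian \<phi> \<psi> x) (at x)"
proof -
  have "DERIV \<phi> x :> deriv \<phi> x" "DERIV (deriv \<phi>) x :> deriv (deriv \<phi>) x"
    "DERIV \<psi> x :> deriv \<psi> x" "DERIV (deriv \<psi>) x :> deriv (deriv \<psi>) x"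
    and eigen: "jacobiT a b \<phi> x = lam * \<phi> x" "jacobiT a b \<psi> x = lam * \<psi> x"
    using assms unfolding jacobi_eigenspace_def by (auto simp: DERIV_deriv_iff_real_differentiable)
  then have W: "DERIV (wronskian \<phi> \<psi>) x :> \<phi> x * deriv (deriv \<psi>) x - deriv (deriv \<phi>) x * \<psi> x"
    unfolding wronskian_def[abs_def] by (auto intro!: derivative_eq_intros simp: algebra_simps)
  let ?p = "(real a + 1) / (x - 1) + (real b + 1) / (x + 1)"
  have "(x\<^sup>2 - 1) * (\<phi> x * deriv (deriv \<psi>) x - deriv (deriv \<phi>) x * \<psi> x + ?p * wronskian \<phi> \<psi> x)
      = \<phi> x * jacobiT a b \<psi> x - \<psi> x * jacobiT a b \<phi> x"
    by (simp add: jacobiT_def wronskian_def algebra_simps)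
  also have "\<dots> = 0"
    using eigen by simp
  moreover have "x\<^sup>2 - 1 \<noteq> 0"
    using \<open>x > 1\<close> less_1_mult[of x x] by (simp add: power2_eq_square)
  ultimately have "\<phi> x * deriv (deriv \<psi>) x - deriv (deriv \<phi>) x * \<psi> x + ?p * wronskian \<phi> \<psi> x = 0"
    by simp
  then have "\<phi> x * deriv (deriv \<psi>) x - deriv (deriv \<phi>) x * \<psi> x = - ?p * wronskian \<phi> \<psi> x"
    by (simp only: add_eq_0_iff2 minus_mult_left)
  with W show ?thesis
    by simp
qed

lemma jacobi_wronskian_abel_identity:
  assumes "\<phi> \<in> jacobi_eigenspace a b lam" and "\<psi> \<in> jacobi_eigenspace a b lam"
  shows "\<exists>K. \<forall>x>1. (x - 1) ^ (a + 1) * (x + 1) ^ (b + 1) * wronskian \<phi> \<psi> x = K"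
proof -
  have "\<exists>K. \<forall>x\<in>{1<..}. (x - 1) ^ Suc a * (x + 1) ^ Suc b * wronskian \<phi> \<psi> x = K"
  proof (rule has_field_derivative_zero_constant)
    fix x :: real
    assume "x \<in> {1<..}"
    then have nonzero: "x - 1 \<noteq> 0" "x + 1 \<noteq> 0" and "x > 1"
      by auto
    have cancel: "r * q * w + - q * w * r = 0" for r q w :: real
      by simp
    from DERIV_mult[OF has_real_derivative_endpoint_powers[OF nonzero, where a = a and b = b]
        jacobi_wronskian_has_derivative[OF assms \<open>x > 1\<close>], unfolded cancel]
    show "((\<lambda>x. (x - 1) ^ Suc a * (x + 1) ^ Suc b * wronskian \<phi> \<psi> x) has_field_derivative 0)
        (at x within {1<..})"
      by (rule has_field_derivative_at_within)
  qed simp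
  then show ?thesis
    by auto
qed

lemma lin_indep2_if_wronskian_nonzero:
  assumes "f differentiable (at x0)" and "g differentiable (at x0)"
    and "x0 > 1" and "wronskian f g x0 \<noteq> 0"
  shows "lin_indep2 f g"
  unfolding lin_indep2_def
proof (intro allI impI)
  fix c1 c2
  assume vanish: "\<forall>x>1. c1 * f x + c2 * g x = 0"
  then have "c1 * f x0 + c2 * g x0 = 0"
    using \<open>x0 > 1\<close> by blast
  moreover have "c1 * deriv f x0 + c2 * deriv g x0 = 0"
    using DERIV_imp_deriv[OF lincomb_has_real_derivative[OF assms(1,2)]]
      deriv_eq_on_Ioi[OF vanish \<open>x0 > 1\<close>] by simp
  ultimately have "c1 * wronskian f g x0 = 0" "c2 * wronskian f g x0 = 0"
    unfolding wronskian_def by algebra+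
  then show "c1 = 0 \<and> c2 = 0"
    using assms(4) by simp
qed

lemma jacobi_eigenspace_spanned:
  assumes \<psi>1: "\<psi>1 \<in> jacobi_eigenspace a b lam" and \<psi>2: "\<psi>2 \<in> jacobi_eigenspace a b lam"
    and "x0 > 1" and "wronskian \<psi>1 \<psi>2 x0 \<noteq> 0" and \<phi>: "\<phi> \<in> jacobi_eigenspace a b lam"
  shows "\<exists>c1 c2. \<forall>x>1. \<phi> x = c1 * \<psi>1 x + c2 * \<psi>2 x"
proof -
  let ?\<rho> = "\<lambda>x::real. (x - 1) ^ (a + 1) * (x + 1) ^ (b + 1)"
  obtain K where K: "\<forall>x>1. ?\<rho> x * wronskian \<psi>1 \<psi>2 x = K"
    using jacobi_wronskian_abel_identity[OF \<psi>1 \<psi>2] by blast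
  obtain K1 where K1: "\<forall>x>1. ?\<rho> x * wronskian \<phi> \<psi>2 x = K1"
    using jacobi_wronskian_abel_identity[OF \<phi> \<psi>2] by blast
  obtain K2 where K2: "\<forall>x>1. ?\<rho> x * wronskian \<psi>1 \<phi> x = K2"
    using jacobi_wronskian_abel_identity[OF \<psi>1 \<phi>] by blast
  have "?\<rho> x0 \<noteq> 0"
    using \<open>x0 > 1\<close> by simp
  then have "K \<noteq> 0"
    using K \<open>x0 > 1\<close> \<open>wronskian \<psi>1 \<psi>2 x0 \<noteq> 0\<close> by force
  \<comment> \<open>Cramer's rule: W(\<psi>1,\<psi>2) \<phi> = W(\<phi>,\<psi>2) \<psi>1 + W(\<psi>1,\<phi>) \<psi>2 holds pointwise.\<close>
  have "K * \<phi> x = K1 * \<psi>1 x + K2 * \<psi>2 x" if "x > 1" for x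
    unfolding K[rule_format, OF that, symmetric] K1[rule_format, OF that, symmetric]
      K2[rule_format, OF that, symmetric]
    by (simp add: wronskian_def algebra_simps)
  then have "\<forall>x>1. \<phi> x = K1 / K * \<psi>1 x + K2 / K * \<psi>2 x"
    using \<open>K \<noteq> 0\<close> by (simp add: field_simps)
  then show ?thesis
    by blast
qed

section \<open>The eigenspace for the eigenvalue (k+1)(k-a-b)\<close>

locale jacobi_endpoint_polys =
  fixes a b k :: nat and p q :: "real poly"
  assumes k_less_a: "k < a" and k_less_b: "k < b"
    and eigen_p: "jacobi_poly_op (real a) (- real b) p =
      smult ((real b - real k - 1) * (real a - real k)) p"
    and degree_p: "degree p = b - k - 1"
    and p_at_1: "poly p 1 \<noteq> 0" and p_at_minus_1: "poly p (-1) \<noteq> 0"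
    and eigen_q: "jacobi_poly_op (- real a) (real b) q =
      smult ((real a - real k - 1) * (real b - real k)) q"
    and degree_q: "degree q = a - k - 1"
    and q_at_1: "poly q 1 \<noteq> 0" and q_at_minus_1: "poly q (-1) \<noteq> 0"
begin

abbreviation Ek :: "(real \<Rightarrow> real) set" where
  "Ek \<equiv> jacobi_eigenspace a b ((real k + 1) * (real k - real a - real b))"

definition psi3 :: "real \<Rightarrow> real" where
  "psi3 x = endpoint_factor a 0 x * poly q x"

definition psi4 :: "real \<Rightarrow> real" where
  "psi4 x = endpoint_factor 0 b x * poly p x"

text \<open>The coefficients of \<open>psi2\<close> make the leading coefficients of the two summands of its
  numerator cancel.\<close>

definition psi2 :: "real \<Rightarrow> real" where
  "psi2 x = lead_coeff p * psi3 x - lead_coeff q * psi4 x"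

definition lincomb_numerator :: "real \<Rightarrow> real \<Rightarrow> real poly" where
  "lincomb_numerator c3 c4 = smult c3 ([:1, 1:] ^ b * q) + smult c4 ([:-1, 1:] ^ a * p)"

lemma p_nonzero: "p \<noteq> 0" and q_nonzero: "q \<noteq> 0"
  using p_at_1 q_at_1 by auto

lemma psi3_in_Ek: "psi3 \<in> Ek"
proof -
  have "(real k + 1) * (real k - real a - real b) + real a * (real b + 1) =
      (real a - real k - 1) * (real b - real k)"
    by (simp add: algebra_simps)
  then show ?thesis
    using eigen_q
    by (subst endpoint_factor_poly_in_jacobi_eigenspace_iff[where \<alpha> = a and \<beta> = 0 and u = q])
      (simp_all add: psi3_def)
qed

lemma psi4_in_Ek: "psi4 \<in> Ek"
proof -
  have "(real k + 1) * (real k - real a - real b) + real b * (real a + 1) =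
      (real b - real k - 1) * (real a - real k)"
    by (simp add: algebra_simps)
  then show ?thesis
    using eigen_p
    by (subst endpoint_factor_poly_in_jacobi_eigenspace_iff[where \<alpha> = 0 and \<beta> = b and u = p])
      (simp_all add: psi4_def)
qed

lemma psi2_in_Ek: "psi2 \<in> Ek"
proof -
  have "psi2 = (\<lambda>x. lead_coeff p * psi3 x + (- lead_coeff q) * psi4 x)"
    by (simp add: psi2_def fun_eq_iff)
  then show ?thesis
    by (simp only:) (intro jacobi_eigenspace_lincomb psi3_in_Ek psi4_in_Ek)
qed

lemma lincomb_psi3_psi4:
  "\<forall>x>1. c3 * psi3 x + c4 * psi4 x = endpoint_factor a b x * poly (lincomb_numerator c3 c4) x"
  by (simp add: psi3_def psi4_def lincomb_numerator_def endpoint_factor_drop(1)[of _ a b]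
    endpoint_factor_drop(2)[of _ b a] algebra_simps)

lemma eigen_lincomb_numerator:
  "jacobi_poly_op (- real a) (- real b) (lincomb_numerator c3 c4) =
    smult (real k * (real k - real a - real b + 1)) (lincomb_numerator c3 c4)"
proof -
  have "(\<lambda>x. c3 * psi3 x + c4 * psi4 x) \<in> Ek"
    by (intro jacobi_eigenspace_lincomb psi3_in_Ek psi4_in_Ek)
  moreover have "(real k + 1) * (real k - real a - real b) + real a * (real b + 1)
      + real b * (real a + 1) - 2 * real a * real b = real k * (real k - real a - real b + 1)"
    by (simp add: algebra_simps)
  ultimately show ?thesis
    by (subst (asm) endpoint_factor_poly_in_jacobi_eigenspace_iff[OF lincomb_psi3_psi4]) simp_all
qed

lemma degree_lincomb_numerator_cases:
  assumes "lincomb_numerator c3 c4 \<noteq> 0"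
  shows "degree (lincomb_numerator c3 c4) = k \<or> degree (lincomb_numerator c3 c4) = a + b - k - 1"
proof -
  let ?d = "real (degree (lincomb_numerator c3 c4))"
  have "real k * (real k - real a - real b + 1) = ?d * (?d + - real a + - real b + 1)"
    by (rule jacobi_poly_op_eigenvalue[OF eigen_lincomb_numerator assms])
  then have "(?d - real k) * (?d - (real a + real b - real k - 1)) = 0"
    by (simp add: algebra_simps)
  then show ?thesis
    using k_less_a by (auto simp: of_nat_diff)
qed

lemma degree_lincomb_numerator_le: "degree (lincomb_numerator c3 c4) \<le> a + b - k - 1"
  and coeff_lincomb_numerator_top:
    "coeff (lincomb_numerator c3 c4) (a + b - k - 1) = c3 * lead_coeff q + c4 * lead_coeff p"
proof -
  have "degree ([:1, 1:] ^ b * q) = a + b - k - 1" "degree ([:-1, 1:] ^ a * p) = a + b - k - 1"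
    using p_nonzero q_nonzero degree_p degree_q k_less_a k_less_b
    by (simp_all add: degree_mult_eq degree_power_eq)
  moreover have "lead_coeff ([:1, 1:] ^ b * q) = lead_coeff q"
    "lead_coeff ([:-1, 1:] ^ a * p) = lead_coeff p"
    by (simp_all add: lead_coeff_mult lead_coeff_power)
  ultimately show "degree (lincomb_numerator c3 c4) \<le> a + b - k - 1"
    "coeff (lincomb_numerator c3 c4) (a + b - k - 1) = c3 * lead_coeff q + c4 * lead_coeff p"
    unfolding lincomb_numerator_def by (auto intro!: degree_add_le order.trans[OF degree_smult_le])
qed

lemma lincomb_numerator_at_1: "poly (lincomb_numerator c3 c4) 1 = c3 * 2 ^ b * poly q 1"
  and lincomb_numerator_at_minus_1:
    "poly (lincomb_numerator c3 c4) (-1) = c4 * (-2) ^ a * poly p (-1)"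
  using k_less_a k_less_b by (simp_all add: lincomb_numerator_def)

lemma typed_eigenfunction_lincomb_psi3_psi4:
  assumes "c3 \<noteq> 0" "c4 \<noteq> 0" "\<forall>x>1. \<phi> x = c3 * psi3 x + c4 * psi4 x"
    and "i = real (degree (lincomb_numerator c3 c4))" and "d = i - real a - real b"
  shows "typed_eigenfunction a b \<phi> 2 i d"
proof -
  have "\<forall>x>1. \<phi> x = endpoint_factor a b x * poly (lincomb_numerator c3 c4) x"
    using assms(3) lincomb_psi3_psi4 by simp
  moreover have "poly (lincomb_numerator c3 c4) 1 \<noteq> 0" "poly (lincomb_numerator c3 c4) (-1) \<noteq> 0"
    using assms(1,2) q_at_1 p_at_minus_1
    by (simp_all add: lincomb_numerator_at_1 lincomb_numerator_at_minus_1)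
  ultimately show ?thesis
    using k_less_a k_less_b assms(4,5)
    by (intro typed_eigenfunction_endpoint_factor_poly) (auto simp: type_offset_def)
qed

lemma wronskian_psi3_psi4_nonzero: "\<exists>x>1. wronskian psi3 psi4 x \<noteq> 0"
proof -
  define R where "R = [:-1, 0, 1:] * (q * pderiv p - pderiv q * p)
    + smult (real a) ([:1, 1:] * q * p) - smult (real b) ([:-1, 1:] * q * p)"
  have "poly R 1 = 2 * real a * poly q 1 * poly p 1"
    by (simp add: R_def)
  then have "R \<noteq> 0"
    using k_less_a q_at_1 p_at_1 by auto
  then obtain x where "x > 1" and "poly R x \<noteq> 0"
    using poly_eq_0_iff_on_Ioi by blast
  then have nonzero: "x - 1 \<noteq> 0" "x + 1 \<noteq> 0"
    by auto
  have "deriv psi3 x = endpoint_factor a 0 x * (poly (pderiv q) x - real a / (x - 1) * poly q x)"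
    "deriv psi4 x = endpoint_factor 0 b x * (poly (pderiv p) x - real b / (x + 1) * poly p x)"
    using deriv_eq_endpoint_factor_poly[of psi3 a 0 q x]
      deriv_eq_endpoint_factor_poly[of psi4 0 b p x] \<open>x > 1\<close>
    by (simp_all add: psi3_def psi4_def)
  then have cleared:
    "(x - 1) * deriv psi3 x =
      endpoint_factor a 0 x * ((x - 1) * poly (pderiv q) x - real a * poly q x)"
    "(x + 1) * deriv psi4 x =
      endpoint_factor 0 b x * ((x + 1) * poly (pderiv p) x - real b * poly p x)"
    using nonzero by (simp_all add: field_simps)
  have "(x - 1) * (x + 1) * wronskian psi3 psi4 x =
      (x - 1) * psi3 x * ((x + 1) * deriv psi4 x) - (x + 1) * psi4 x * ((x - 1) * deriv psi3 x)"
    by (simp add: wronskian_def algebra_simps)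
  also have "\<dots> = endpoint_factor a 0 x * endpoint_factor 0 b x * poly R x"
    unfolding cleared by (simp add: psi3_def psi4_def R_def algebra_simps)
  finally have "(x - 1) * (x + 1) * wronskian psi3 psi4 x =
      endpoint_factor a 0 x * endpoint_factor 0 b x * poly R x" .
  then have "wronskian psi3 psi4 x \<noteq> 0"
    using \<open>x > 1\<close> \<open>poly R x \<noteq> 0\<close> endpoint_factor_pos[of x a 0] endpoint_factor_pos[of x 0 b]
    by auto
  then show ?thesis
    using \<open>x > 1\<close> by blast
qed

lemma lin_indep2_psi3_psi4: "lin_indep2 psi3 psi4"
  using wronskian_psi3_psi4_nonzero psi3_in_Ek psi4_in_Ek
  by (auto simp: jacobi_eigenspace_def intro: lin_indep2_if_wronskian_nonzero)

lemma Ek_spanned: "\<forall>\<phi>\<in>Ek. \<exists>c3 c4. \<forall>x>1. \<phi> x = c3 * psi3 x + c4 * psi4 x"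
  using wronskian_psi3_psi4_nonzero jacobi_eigenspace_spanned[OF psi3_in_Ek psi4_in_Ek] by blast

lemma rational_fun_Ek: "\<phi> \<in> Ek \<Longrightarrow> rational_fun \<phi>"
proof -
  assume "\<phi> \<in> Ek"
  then obtain c3 c4 where c: "\<forall>x>1. \<phi> x = c3 * psi3 x + c4 * psi4 x"
    using Ek_spanned by blast
  show "rational_fun \<phi>"
    unfolding rational_fun_def
  proof (intro exI conjI allI impI)
    show "[:-1, 1:] ^ a * [:1, 1:] ^ b \<noteq> (0 :: real poly)"
      by simp
    fix x :: real
    assume "x > 1"
    then show "poly ([:-1, 1:] ^ a * [:1, 1:] ^ b) x * \<phi> x = poly (lincomb_numerator c3 c4) x"
      using c lincomb_psi3_psi4 endpoint_factor_mult_powers[of x a b] by (simp add: algebra_simps)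
  qed
qed

lemma typed_eigenfunction_in_line_psi3:
  assumes "in_line psi3 \<phi>" and "nonzero_on \<phi>"
  shows "typed_eigenfunction a b \<phi> 3 (real a - real k - 1) (- real k - 1)"
proof -
  obtain c where c: "\<forall>x>1. \<phi> x = c * psi3 x"
    using assms(1) unfolding in_line_def by blast
  then have "c \<noteq> 0"
    using assms(2) unfolding nonzero_on_def by auto
  have "\<forall>x>1. \<phi> x = endpoint_factor a 0 x * poly (smult c q) x"
    using c by (simp add: psi3_def)
  then show ?thesis
    using \<open>c \<noteq> 0\<close> q_at_1 q_at_minus_1 k_less_a
    by (intro typed_eigenfunction_endpoint_factor_poly[where \<alpha> = a and \<beta> = 0 and u = "smult c q"])
      (auto simp: degree_q type_offset_def of_nat_diff)
qed

lemma typed_eigenfunction_in_line_psi4: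
  assumes "in_line psi4 \<phi>" and "nonzero_on \<phi>"
  shows "typed_eigenfunction a b \<phi> 4 (real b - real k - 1) (- real k - 1)"
proof -
  obtain c where c: "\<forall>x>1. \<phi> x = c * psi4 x"
    using assms(1) unfolding in_line_def by blast
  then have "c \<noteq> 0"
    using assms(2) unfolding nonzero_on_def by auto
  have "\<forall>x>1. \<phi> x = endpoint_factor 0 b x * poly (smult c p) x"
    using c by (simp add: psi4_def)
  then show ?thesis
    using \<open>c \<noteq> 0\<close> p_at_1 p_at_minus_1 k_less_b
    by (intro typed_eigenfunction_endpoint_factor_poly[where \<alpha> = 0 and \<beta> = b and u = "smult c p"])
      (auto simp: degree_p type_offset_def of_nat_diff)
qed

lemma typed_eigenfunction_in_line_psi2:
  assumes "in_line psi2 \<phi>" and "nonzero_on \<phi>"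
  shows "typed_eigenfunction a b \<phi> 2 (real k) (real k - real a - real b)"
proof -
  obtain c where c: "\<forall>x>1. \<phi> x = c * psi2 x"
    using assms(1) unfolding in_line_def by blast
  then have "c \<noteq> 0"
    using assms(2) unfolding nonzero_on_def by auto
  define c3 c4 where "c3 = c * lead_coeff p" and "c4 = - c * lead_coeff q"
  have "c3 \<noteq> 0" "c4 \<noteq> 0"
    using \<open>c \<noteq> 0\<close> p_nonzero q_nonzero by (simp_all add: c3_def c4_def)
  have lincomb: "\<forall>x>1. \<phi> x = c3 * psi3 x + c4 * psi4 x"
    using c by (simp add: psi2_def c3_def c4_def algebra_simps)
  have "lincomb_numerator c3 c4 \<noteq> 0"
    using \<open>c3 \<noteq> 0\<close> q_at_1 lincomb_numerator_at_1[of c3 c4] by auto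
  moreover have "degree (lincomb_numerator c3 c4) \<noteq> a + b - k - 1"
  proof
    assume "degree (lincomb_numerator c3 c4) = a + b - k - 1"
    then have "lead_coeff (lincomb_numerator c3 c4) = c3 * lead_coeff q + c4 * lead_coeff p"
      by (simp only: coeff_lincomb_numerator_top)
    also have "\<dots> = 0"
      by (simp add: c3_def c4_def)
    finally show False
      using \<open>lincomb_numerator c3 c4 \<noteq> 0\<close> by simp
  qed
  ultimately have "degree (lincomb_numerator c3 c4) = k"
    using degree_lincomb_numerator_cases by blast
  then show ?thesis
    by (intro typed_eigenfunction_lincomb_psi3_psi4[OF \<open>c3 \<noteq> 0\<close> \<open>c4 \<noteq> 0\<close> lincomb]) simp_all
qed

lemma typed_eigenfunction_off_lines:
  assumes "\<phi> \<in> Ek" and "\<not> in_line psi2 \<phi>" and "\<not> in_line psi3 \<phi>" and "\<not> in_line psi4 \<phi>"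
  shows "typed_eigenfunction a b \<phi> 2 (real a + real b - real k - 1) (- real k - 1)"
proof -
  obtain c3 c4 where lincomb: "\<forall>x>1. \<phi> x = c3 * psi3 x + c4 * psi4 x"
    using Ek_spanned assms(1) by blast
  have "c3 \<noteq> 0"
    using lincomb assms(4) unfolding in_line_def by auto
  have "c4 \<noteq> 0"
    using lincomb assms(3) unfolding in_line_def by auto
  have "c3 * lead_coeff q + c4 * lead_coeff p \<noteq> 0"
  proof
    assume "c3 * lead_coeff q + c4 * lead_coeff p = 0"
    then have c4: "c4 = - c3 * lead_coeff q / lead_coeff p"
      using p_nonzero by (simp add: field_simps)
    have "c3 * psi3 x + c4 * psi4 x = c3 / lead_coeff p * psi2 x" for x
      unfolding psi2_def c4 using p_nonzero by (simp add: field_simps)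
    then have "\<forall>x>1. \<phi> x = c3 / lead_coeff p * psi2 x"
      using lincomb by simp
    then show False
      using assms(2) unfolding in_line_def by blast
  qed
  then have "coeff (lincomb_numerator c3 c4) (a + b - k - 1) \<noteq> 0"
    unfolding coeff_lincomb_numerator_top .
  then have "degree (lincomb_numerator c3 c4) = a + b - k - 1"
    using degree_lincomb_numerator_le le_degree antisym by blast
  then show ?thesis
    using k_less_a by (intro typed_eigenfunction_lincomb_psi3_psi4[OF \<open>c3 \<noteq> 0\<close> \<open>c4 \<noteq> 0\<close> lincomb])
      (simp_all add: of_nat_diff)
qed

lemma nonzero_on_psi: "nonzero_on psi2" "nonzero_on psi3" "nonzero_on psi4"
proof -
  have "poly (lincomb_numerator (lead_coeff p) (- lead_coeff q)) 1 \<noteq> 0"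
    using p_nonzero q_at_1 by (simp add: lincomb_numerator_at_1)
  then show "nonzero_on psi2"
    using lincomb_psi3_psi4[of "lead_coeff p" "- lead_coeff q"]
    by (intro nonzero_on_endpoint_factor_poly[where \<alpha> = a and \<beta> = b
          and u = "lincomb_numerator (lead_coeff p) (- lead_coeff q)"])
      (auto simp: psi2_def)
  show "nonzero_on psi3"
    using q_nonzero
    by (intro nonzero_on_endpoint_factor_poly[where \<alpha> = a and \<beta> = 0 and u = q])
      (simp_all add: psi3_def)
  show "nonzero_on psi4"
    using p_nonzero
    by (intro nonzero_on_endpoint_factor_poly[where \<alpha> = 0 and \<beta> = b and u = p])
      (simp_all add: psi4_def)
qed

lemma psi_pairwise_not_in_line: "\<not> in_line psi2 psi3" "\<not> in_line psi2 psi4" "\<not> in_line psi3 psi4"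
proof -
  have "in_line \<psi> \<psi>" for \<psi>
    unfolding in_line_def by (rule exI[of _ 1]) simp
  then have "asym_type psi3 = 3" "asym_type psi4 = 4"
    using typed_eigenfunction_in_line_psi3 typed_eigenfunction_in_line_psi4 nonzero_on_psi
    unfolding typed_eigenfunction_def by blast+
  then show "\<not> in_line psi2 psi3" "\<not> in_line psi2 psi4" "\<not> in_line psi3 psi4"
    using typed_eigenfunction_in_line_psi2 typed_eigenfunction_in_line_psi3 nonzero_on_psi
    unfolding typed_eigenfunction_def by force+
qed

end

lemma jacobi_endpoint_polys_exist:
  assumes "k < a" and "k < b"
  shows "\<exists>p q. jacobi_endpoint_polys a b k p q"
proof -
  have shifted_nonzero: "real i + - real c + 1 \<noteq> 0" if "i < c - k - 1" for i c
  proof -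
    have "real (i + 1) < real c"
      using that by (simp only: of_nat_less_iff)
    then show ?thesis
      by simp
  qed
  obtain p where p: "jacobi_poly_op (real a) (- real b) p =
      smult (real (b - k - 1) * (real (b - k - 1) + real a + - real b + 1)) p"
    "degree p = b - k - 1" "poly p 1 \<noteq> 0" "poly p (-1) \<noteq> 0"
    using jacobi_eigenpoly_exists[of "b - k - 1" "real a" "- real b"] assms shifted_nonzero[of _ b]
    by (auto simp: of_nat_diff)
  obtain q where q: "jacobi_poly_op (- real a) (real b) q =
      smult (real (a - k - 1) * (real (a - k - 1) + - real a + real b + 1)) q"
    "degree q = a - k - 1" "poly q 1 \<noteq> 0" "poly q (-1) \<noteq> 0"
    using jacobi_eigenpoly_exists[of "a - k - 1" "- real a" "real b"] assms shifted_nonzero[of _ a]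
    by (auto simp: of_nat_diff add.commute)
  have "jacobi_endpoint_polys a b k p q"
    using assms p q by unfold_locales (simp_all add: of_nat_diff algebra_simps)
  then show ?thesis
    by blast
qed

theorem mainTheorem20:
  fixes a b k :: nat
  assumes "b \<le> a" and "k < b"
  defines "E \<equiv> jacobi_eigenspace a b ((real k + 1) * (real k - real a - real b))"
  shows "(\<exists>\<phi>1\<in>E. \<exists>\<phi>2\<in>E. lin_indep2 \<phi>1 \<phi>2 \<and>
            (\<forall>\<phi>\<in>E. \<exists>c1 c2. \<forall>x>1. \<phi> x = c1 * \<phi>1 x + c2 * \<phi>2 x))
       \<and> (\<forall>\<phi>\<in>E. rational_fun \<phi>)
       \<and> (\<exists>\<psi>2\<in>E. \<exists>\<psi>3\<in>E. \<exists>\<psi>4\<in>E.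
            nonzero_on \<psi>2 \<and> nonzero_on \<psi>3 \<and> nonzero_on \<psi>4
          \<and> \<not> in_line \<psi>2 \<psi>3 \<and> \<not> in_line \<psi>2 \<psi>4 \<and> \<not> in_line \<psi>3 \<psi>4
          \<and> (\<forall>\<phi>\<in>E. in_line \<psi>2 \<phi> \<and> nonzero_on \<phi> \<longrightarrow>
               typed_eigenfunction a b \<phi> 2 (real k) (real k - real a - real b))
          \<and> (\<forall>\<phi>\<in>E. in_line \<psi>3 \<phi> \<and> nonzero_on \<phi> \<longrightarrow>
               typed_eigenfunction a b \<phi> 3 (real a - real k - 1) (- real k - 1))
          \<and> (\<forall>\<phi>\<in>E. in_line \<psi>4 \<phi> \<and> nonzero_on \<phi> \<longrightarrow>
               typed_eigenfunction a b \<phi> 4 (real b - real k - 1) (- real k - 1))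
          \<and> (\<forall>\<phi>\<in>E. \<not> in_line \<psi>2 \<phi> \<and> \<not> in_line \<psi>3 \<phi> \<and> \<not> in_line \<psi>4 \<phi> \<longrightarrow>
               typed_eigenfunction a b \<phi> 2 (real a + real b - real k - 1) (- real k - 1)))"
proof -
  obtain p q where "jacobi_endpoint_polys a b k p q"
    using jacobi_endpoint_polys_exist assms(1,2) by fastforce
  then interpret jacobi_endpoint_polys a b k p q .
  show ?thesis
    unfolding E_def
    using psi2_in_Ek psi3_in_Ek psi4_in_Ek lin_indep2_psi3_psi4 Ek_spanned rational_fun_Ek
      nonzero_on_psi psi_pairwise_not_in_line typed_eigenfunction_in_line_psi2
      typed_eigenfunction_in_line_psi3 typed_eigenfunction_in_line_psi4
      typed_eigenfunction_off_lines
    by blast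
qed

end
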